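(* Let $F$ be a field and $A$ a quadratic $F$-algebra. (1) If $a,b\in A$ and $B=\mathrm{span}\{1,a,b\}$ satisfies $ab\in B$, then $B$ is a subalgebra of $A$. (2) $A$ is von-Neumann finite (respectively, reversible) if and only if every $3$-dimensional subalgebra of $A$ is von-Neumann finite (respectively, reversible). (3) $A$ is both von-Neumann finite and reversible if and only if every $3$-dimensional subalgebra of $A$ is commutative.
   Context: An $F$-algebra is a vector space with bilinear, not necessarily associative, multiplication. $A$ is quadratic if it is unital and $1,a,a^2$ are linearly dependent for all $a\in A$. $A$ is von-Neumann finite if $ab=1$ implies $ba=1$, and reversible if $ab=0$ implies $ba=0$, for all $a,b\in A$. *)

theory Defs
  imports Main "HOL.Vector_Spaces"
begin

definition f_algebra :: "('k::field \<Rightarrow> 'v::ab_group_add \<Rightarrow> 'v) \<Rightarrow> ('v \<Rightarrow> 'v \<Rightarrow> 'v) \<Rightarrow> bool" where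
  "f_algebra scale mul \<longleftrightarrow> vector_space scale \<and>
     (\<forall>x y z. mul (x + y) z = mul x z + mul y z) \<and>
     (\<forall>x y z. mul x (y + z) = mul x y + mul x z) \<and>
     (\<forall>c x y. mul (scale c x) y = scale c (mul x y)) \<and>
     (\<forall>c x y. mul x (scale c y) = scale c (mul x y))"

definition quadratic_algebra :: "('k::field \<Rightarrow> 'v::ab_group_add \<Rightarrow> 'v) \<Rightarrow> ('v \<Rightarrow> 'v \<Rightarrow> 'v) \<Rightarrow> 'v \<Rightarrow> bool" where
  "quadratic_algebra scale mul e \<longleftrightarrow> f_algebra scale mul \<and>
     (\<forall>x. mul e x = x \<and> mul x e = x) \<and>
     (\<forall>a. \<exists>\<alpha> \<beta> \<gamma>. (\<alpha> \<noteq> 0 \<or> \<beta> \<noteq> 0 \<or> \<gamma> \<noteq> 0) \<and>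
            scale \<alpha> e + scale \<beta> a + scale \<gamma> (mul a a) = 0)"

definition subalgebra :: "('k::field \<Rightarrow> 'v::ab_group_add \<Rightarrow> 'v) \<Rightarrow> ('v \<Rightarrow> 'v \<Rightarrow> 'v) \<Rightarrow> 'v \<Rightarrow> 'v set \<Rightarrow> bool" where
  "subalgebra scale mul e B \<longleftrightarrow> module.subspace scale B \<and> e \<in> B \<and>
     (\<forall>x\<in>B. \<forall>y\<in>B. mul x y \<in> B)"

definition vn_finite_on :: "('v \<Rightarrow> 'v \<Rightarrow> 'v) \<Rightarrow> 'v \<Rightarrow> 'v set \<Rightarrow> bool" where
  "vn_finite_on mul e B \<longleftrightarrow> (\<forall>a\<in>B. \<forall>b\<in>B. mul a b = e \<longrightarrow> mul b a = e)"

definition reversible_on :: "('v \<Rightarrow> 'v \<Rightarrow> 'v::zero) \<Rightarrow> 'v set \<Rightarrow> bool" where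
  "reversible_on mul B \<longleftrightarrow> (\<forall>a\<in>B. \<forall>b\<in>B. mul a b = 0 \<longrightarrow> mul b a = 0)"

definition commutative_on :: "('v \<Rightarrow> 'v \<Rightarrow> 'v) \<Rightarrow> 'v set \<Rightarrow> bool" where
  "commutative_on mul B \<longleftrightarrow> (\<forall>a\<in>B. \<forall>b\<in>B. mul a b = mul b a)"

end

theory Submission
  imports Defs
begin

text \<open>In a quadratic algebra every element is algebraic of degree at most 2 over the unit,
  so two elements generate a subspace span {1, a, b} that is closed under multiplication as soon
  as it contains ab: the remaining products a^2, b^2 lie in it by quadraticity and ba by
  polarising (a + b)^2. Hence a non-commuting pair a, b with ab = 1 or ab = 0 always lies in a
  3-dimensional subalgebra, which gives (2). For (3), if A is von-Neumann finite and reversible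
  and ab = p + qa + rb, then x = a - r and y = b - q satisfy xy = p + qr; both properties force
  yx = xy, and expanding yields ab = ba.\<close>

context vector_space
begin

lemma independent_spans_if_card_ge_dim:
  assumes "S \<subseteq> V" "independent S" "0 < dim V" "dim V \<le> card S"
  shows "V \<subseteq> span S"
proof
  fix x assume "x \<in> V"
  show "x \<in> span S"
  proof (rule ccontr)
    assume x: "x \<notin> span S"
    obtain A where A: "A \<subseteq> V" "independent A" "V \<subseteq> span A" "card A = dim V"
      using basis_exists by blast
    have "finite A" "finite S"
      using A(4) assms(3,4) by (auto intro: card_ge_0_finite)
    have "x \<notin> S" using x span_base by blast
    have "independent (insert x S)"
      using x assms(2) by (simp add: independent_insert)
    moreover have "insert x S \<subseteq> span A" using A(3) assms(1) \<open>x \<in> V\<close> by blast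
    ultimately have "card (insert x S) \<le> card A"
      using independent_span_bound[OF \<open>finite A\<close>] by blast
    then show False using A(4) assms(4) \<open>finite S\<close> \<open>x \<notin> S\<close> by simp
  qed
qed

end

locale bilinear_algebra =
  fixes scale :: "'k::field \<Rightarrow> 'v::ab_group_add \<Rightarrow> 'v"
    and mul :: "'v \<Rightarrow> 'v \<Rightarrow> 'v"
  assumes f_algebra: "f_algebra scale mul"
begin

sublocale vector_space scale
  using f_algebra by (simp add: f_algebra_def)

lemma mul_add_left: "mul (x + y) z = mul x z + mul y z"
  and mul_add_right: "mul x (y + z) = mul x y + mul x z"
  and mul_scale_left: "mul (scale c x) y = scale c (mul x y)"
  and mul_scale_right: "mul x (scale c y) = scale c (mul x y)"
  using f_algebra by (simp_all add: f_algebra_def)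

lemma mul_zero_left: "mul 0 y = 0"
  using mul_add_left[of 0 0 y] by simp

lemma mul_zero_right: "mul y 0 = 0"
  using mul_add_right[of y 0 0] by simp

lemma mul_diff_left: "mul (x - y) z = mul x z - mul y z"
  using mul_add_left[of "x - y" y z] by (simp add: algebra_simps)

lemma mul_diff_right: "mul z (x - y) = mul z x - mul z y"
  using mul_add_right[of z "x - y" y] by (simp add: algebra_simps)

lemmas mul_bilinear_simps = mul_add_left mul_add_right mul_scale_left mul_scale_right
  mul_zero_left mul_zero_right mul_diff_left mul_diff_right

lemma mul_span_closed_if_generators:
  assumes "\<And>s t. s \<in> S \<Longrightarrow> t \<in> S \<Longrightarrow> mul s t \<in> span S"
    and "x \<in> span S" "y \<in> span S"
  shows "mul x y \<in> span S"
proof -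
  have left: "mul x' t \<in> span S" if "x' \<in> span S" "t \<in> S" for x' t
    using that(1)
  proof (induct rule: span_induct)
    case base
    show ?case
      by (rule subspaceI)
        (auto simp: mul_bilinear_simps intro: span_add span_scale span_zero)
  next
    case (step s)
    then show ?case using assms(1) that(2) by blast
  qed
  show ?thesis using \<open>y \<in> span S\<close>
  proof (induct rule: span_induct)
    case base
    show ?case
      by (rule subspaceI)
        (auto simp: mul_bilinear_simps intro: span_add span_scale span_zero)
  next
    case (step t)
    then show ?case using left \<open>x \<in> span S\<close> by blast
  qed
qed

end

locale unital_algebra = bilinear_algebra scale mul
  for scale :: "'k::field \<Rightarrow> 'v::ab_group_add \<Rightarrow> 'v" and mul +
  fixes e :: 'v
  assumes mul_unit_left: "mul e x = x"
    and mul_unit_right: "mul x e = x"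
begin

lemma trivial_if_unit_eq_zero: "e = 0 \<Longrightarrow> (x::'v) = 0"
  using mul_unit_left[of x] mul_zero_left[of x] by simp

lemma mul_commute_on_span_unit:
  assumes "x \<in> span {e, c}" "y \<in> span {e, c}"
  shows "mul x y = mul y x"
proof -
  have repr: "\<exists>p q. z = scale p e + scale q c" if "z \<in> span {e, c}" for z
    using that by (auto simp: span_insert span_singleton) (metis diff_add_cancel add.commute)
  obtain p q r s where "x = scale p e + scale q c" "y = scale r e + scale s c"
    using repr assms by blast
  then show ?thesis
    by (simp add: mul_bilinear_simps mul_unit_left mul_unit_right scale_scale
        algebra_simps mult.commute)
qed

lemma independent_unit_if_not_commute:
  assumes "mul a b \<noteq> mul b a"
  shows "independent {e, a, b}" "card {e, a, b} = 3"
proof -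
  have "e \<noteq> 0" using assms trivial_if_unit_eq_zero by metis
  have "a \<notin> span {e}"
  proof
    assume "a \<in> span {e}"
    then have "a \<in> span {e, b}" using span_mono[of "{e}" "{e, b}"] by blast
    then show False
      using assms mul_commute_on_span_unit span_base[of b "{e, b}"] by blast
  qed
  have "b \<notin> span {e, a}"
    using assms mul_commute_on_span_unit span_base[of a "{e, a}"] by blast
  then have "a \<noteq> e" "b \<noteq> a" "b \<noteq> e"
    using \<open>a \<notin> span {e}\<close> span_base by blast+
  have "independent {a, e}"
    using \<open>e \<noteq> 0\<close> \<open>a \<notin> span {e}\<close> \<open>a \<noteq> e\<close> by (simp add: independent_insert)
  moreover have "b \<notin> span {a, e}" using \<open>b \<notin> span {e, a}\<close> by (simp add: insert_commute)
  ultimately have "independent (insert b {a, e})" by (simp add: independent_insertI)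
  then show "independent {e, a, b}" by (simp add: insert_commute)
  show "card {e, a, b} = 3"
    using \<open>a \<noteq> e\<close> \<open>b \<noteq> a\<close> \<open>b \<noteq> e\<close> by auto
qed

lemma mul_commute_if_vn_finite_reversible:
  assumes vn: "vn_finite_on mul e UNIV" and rv: "reversible_on mul UNIV"
    and "mul a b \<in> span {e, a, b}"
  shows "mul a b = mul b a"
proof -
  obtain p q r where ab: "mul a b = scale p e + scale q a + scale r b"
    using \<open>mul a b \<in> span {e, a, b}\<close>
    by (auto simp: span_insert span_singleton) (metis diff_add_cancel add.commute add.assoc)
  define x where "x = a - scale r e"
  define y where "y = b - scale q e"
  define d where "d = p + q * r"
  have xy: "mul x y = scale d e"
    unfolding x_def y_def d_def
    by (simp add: mul_bilinear_simps mul_unit_left mul_unit_right ab algebra_simps scale_scale)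
  have yx: "mul y x = mul b a - scale r b - scale q a + scale (q * r) e"
    unfolding x_def y_def
    by (simp add: mul_bilinear_simps mul_unit_left mul_unit_right algebra_simps scale_scale)
  have "mul y x = mul x y"
  proof (cases "d = 0")
    case True
    then show ?thesis using rv xy unfolding reversible_on_def by simp
  next
    case False
    then have "mul x (scale (inverse d) y) = e" using xy by (simp add: mul_scale_right)
    then have "mul (scale (inverse d) y) x = e" using vn unfolding vn_finite_on_def by blast
    then have "scale d (scale (inverse d) (mul y x)) = scale d e" by (simp add: mul_scale_left)
    then show ?thesis using False xy by (simp add: scale_scale)
  qed
  then show ?thesis using yx xy ab unfolding d_def by (simp add: algebra_simps scale_scale)
qed

end

locale quadratic_unital_algebra = unital_algebra +
  assumes quadratic: "\<exists>\<alpha> \<beta> \<gamma>. (\<alpha> \<noteq> 0 \<or> \<beta> \<noteq> 0 \<or> \<gamma> \<noteq> 0) \<and>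
      scale \<alpha> e + scale \<beta> a + scale \<gamma> (mul a a) = 0"
begin

lemma mul_self_in_span_unit: "mul a a \<in> span {e, a}"
proof -
  obtain \<alpha> \<beta> \<gamma> where nontrivial: "\<alpha> \<noteq> 0 \<or> \<beta> \<noteq> 0 \<or> \<gamma> \<noteq> 0"
    and rel: "scale \<alpha> e + scale \<beta> a + scale \<gamma> (mul a a) = 0"
    using quadratic by blast
  have "e \<in> span {e, a}" "a \<in> span {e, a}" by (auto intro: span_base)
  consider "\<gamma> \<noteq> 0" | "\<gamma> = 0" "\<beta> \<noteq> 0" | "\<gamma> = 0" "\<beta> = 0" "\<alpha> \<noteq> 0"
    using nontrivial by blast
  then show ?thesis
  proof cases
    case 1
    have "scale \<gamma> (mul a a) = - (scale \<alpha> e + scale \<beta> a)"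
      using rel by (metis add.commute eq_neg_iff_add_eq_0)
    then have "mul a a = scale (- inverse \<gamma>) (scale \<alpha> e + scale \<beta> a)"
      using 1 by (metis scale_scale left_inverse scale_one scale_minus_left scale_minus_right)
    then show ?thesis using \<open>e \<in> span {e, a}\<close> \<open>a \<in> span {e, a}\<close>
      by (metis span_scale span_add)
  next
    case 2
    then have "scale \<beta> a = - scale \<alpha> e"
      using rel by (simp add: eq_neg_iff_add_eq_0 add.commute)
    then have "a = scale (- (inverse \<beta> * \<alpha>)) e"
      using 2 by (metis scale_scale left_inverse scale_one scale_minus_left scale_minus_right)
    then have "mul a a = scale (- (inverse \<beta> * \<alpha>)) a"
      by (metis mul_scale_right mul_unit_right)
    then show ?thesis using \<open>a \<in> span {e, a}\<close> by (metis span_scale)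
  next
    case 3
    then have "e = 0" using rel by simp
    then show ?thesis using trivial_if_unit_eq_zero span_zero by metis
  qed
qed

lemma subalgebra_span_unit_pair:
  assumes ab: "mul a b \<in> span {e, a, b}"
  shows "subalgebra scale mul e (span {e, a, b})"
proof -
  let ?S = "{e, a, b}"
  have squares: "mul c c \<in> span ?S" if "c \<in> span ?S" for c
  proof -
    have "span {e, c} \<subseteq> span ?S"
      using that by (intro span_minimal) (auto intro: span_base)
    then show ?thesis using mul_self_in_span_unit by blast
  qed
  have "mul b a = mul (a + b) (a + b) - mul a a - mul a b - mul b b"
    by (simp add: mul_bilinear_simps algebra_simps)
  then have ba: "mul b a \<in> span ?S"
    using ab squares[of a] squares[of b] squares[of "a + b"]
    by (metis span_diff span_add span_base insertCI)
  have generators: "mul s t \<in> span ?S" if "s \<in> ?S" "t \<in> ?S" for s t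
    using that ab ba squares[of a] squares[of b]
    by (auto simp: mul_unit_left mul_unit_right intro: span_base)
  show ?thesis
    unfolding subalgebra_def
    using mul_span_closed_if_generators[OF generators] by (auto intro: span_base)
qed

lemma three_dim_subalgebra_if_not_commute:
  assumes "mul a b \<noteq> mul b a" "mul a b \<in> span {e, a, b}"
  shows "subalgebra scale mul e (span {e, a, b})" "dim (span {e, a, b}) = 3"
  using assms subalgebra_span_unit_pair independent_unit_if_not_commute
  by (simp_all add: dim_eq_card_independent)

lemma vn_finite_iff_three_dim_subalgebras:
  "vn_finite_on mul e UNIV \<longleftrightarrow>
     (\<forall>B. subalgebra scale mul e B \<and> dim B = 3 \<longrightarrow> vn_finite_on mul e B)"
proof (intro iffI allI impI)
  show "vn_finite_on mul e B" if "vn_finite_on mul e UNIV" for B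
    using that by (simp add: vn_finite_on_def)
next
  assume in_subalgebras: "\<forall>B. subalgebra scale mul e B \<and> dim B = 3 \<longrightarrow> vn_finite_on mul e B"
  show "vn_finite_on mul e UNIV" unfolding vn_finite_on_def
  proof (intro ballI impI)
    fix a b assume "mul a b = e"
    then have "mul a b \<in> span {e, a, b}" by (simp add: span_base)
    then show "mul b a = e"
      using in_subalgebras three_dim_subalgebra_if_not_commute[of a b] \<open>mul a b = e\<close>
      by (metis vn_finite_on_def span_base insertCI)
  qed
qed

lemma reversible_iff_three_dim_subalgebras:
  "reversible_on mul UNIV \<longleftrightarrow>
     (\<forall>B. subalgebra scale mul e B \<and> dim B = 3 \<longrightarrow> reversible_on mul B)"
proof (intro iffI allI impI)
  show "reversible_on mul B" if "reversible_on mul UNIV" for B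
    using that by (simp add: reversible_on_def)
next
  assume in_subalgebras: "\<forall>B. subalgebra scale mul e B \<and> dim B = 3 \<longrightarrow> reversible_on mul B"
  show "reversible_on mul UNIV" unfolding reversible_on_def
  proof (intro ballI impI)
    fix a b assume "mul a b = 0"
    then have "mul a b \<in> span {e, a, b}" by (simp add: span_zero)
    then show "mul b a = 0"
      using in_subalgebras three_dim_subalgebra_if_not_commute[of a b] \<open>mul a b = 0\<close>
      by (metis reversible_on_def span_base insertCI)
  qed
qed

lemma vn_finite_reversible_iff_three_dim_subalgebras_commutative:
  "vn_finite_on mul e UNIV \<and> reversible_on mul UNIV \<longleftrightarrow>
     (\<forall>B. subalgebra scale mul e B \<and> dim B = 3 \<longrightarrow> commutative_on mul B)"
proof (intro iffI allI impI)
  fix B assume vn_rv: "vn_finite_on mul e UNIV \<and> reversible_on mul UNIV"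
    and B: "subalgebra scale mul e B \<and> dim B = 3"
  show "commutative_on mul B" unfolding commutative_on_def
  proof (intro ballI)
    fix a b assume "a \<in> B" "b \<in> B"
    show "mul a b = mul b a"
    proof (rule ccontr)
      assume nc: "mul a b \<noteq> mul b a"
      have "B \<subseteq> span {e, a, b}"
        using B \<open>a \<in> B\<close> \<open>b \<in> B\<close> independent_unit_if_not_commute[OF nc]
        by (intro independent_spans_if_card_ge_dim) (auto simp: subalgebra_def)
      moreover have "mul a b \<in> B" using B \<open>a \<in> B\<close> \<open>b \<in> B\<close> by (simp add: subalgebra_def)
      ultimately show False
        using mul_commute_if_vn_finite_reversible vn_rv nc by blast
    qed
  qed
next
  assume "\<forall>B. subalgebra scale mul e B \<and> dim B = 3 \<longrightarrow> commutative_on mul B"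
  then show "vn_finite_on mul e UNIV \<and> reversible_on mul UNIV"
    unfolding vn_finite_iff_three_dim_subalgebras reversible_iff_three_dim_subalgebras
    by (metis commutative_on_def vn_finite_on_def reversible_on_def)
qed

end

theorem lemma3p4:
  fixes scale :: "'k::field \<Rightarrow> 'v::ab_group_add \<Rightarrow> 'v"
    and mul :: "'v \<Rightarrow> 'v \<Rightarrow> 'v"
    and e :: 'v
  assumes "quadratic_algebra scale mul e"
  shows "(\<forall>a b. mul a b \<in> module.span scale {e, a, b}
            \<longrightarrow> subalgebra scale mul e (module.span scale {e, a, b}))
       \<and> (vn_finite_on mul e UNIV \<longleftrightarrow>
            (\<forall>B. subalgebra scale mul e B \<and> vector_space.dim scale B = 3 \<longrightarrow> vn_finite_on mul e B))
       \<and> (reversible_on mul UNIV \<longleftrightarrow>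
            (\<forall>B. subalgebra scale mul e B \<and> vector_space.dim scale B = 3 \<longrightarrow> reversible_on mul B))
       \<and> (vn_finite_on mul e UNIV \<and> reversible_on mul UNIV \<longleftrightarrow>
            (\<forall>B. subalgebra scale mul e B \<and> vector_space.dim scale B = 3 \<longrightarrow> commutative_on mul B))"
proof -
  interpret quadratic_unital_algebra scale mul e
    using assms by unfold_locales (simp_all add: quadratic_algebra_def)
  show ?thesis
    using subalgebra_span_unit_pair vn_finite_iff_three_dim_subalgebras
      reversible_iff_three_dim_subalgebras
      vn_finite_reversible_iff_three_dim_subalgebras_commutative
    by blast
qed

end
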